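(* Let $\omega:[0,1]\to[0,1/2]$ satisfy $\omega\in C^0([0,1])\cap C^\infty((0,1))$, $\omega'(t)>0$ for all $t\in(0,1)$, $\omega(0)=0$, $\omega(1)=\tfrac12$. Let $\Delta\subset\mathbb{R}^2$ be the interior of the triangle with vertices $(-1,0)$, $(1,1)$, $(1,0)$, and for $a\in(0,1)$ let $l_a=\{(x_1,x_2)\in\mathbb{R}^2:\ x_2=\omega(a)(x_1+a),\ x_1\in(-a,1)\}$. Then there exists $u\in C^{0,1}(\overline{\Delta})\cap C^2(\Delta)$ such that $$|u(x)-u(y)|\le|x-y|\qquad\text{for all } x,y\in\Delta,$$ with equality if and only if $x,y\in l_a$ for some $a\in(0,1)$. *)

theory Defs
  imports "HOL-Analysis.Analysis"
begin

definition C_infinity_on :: "real set \<Rightarrow> (real \<Rightarrow> real) \<Rightarrow> bool" where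
  "C_infinity_on S f \<longleftrightarrow> (\<forall>k. ((deriv ^^ k) f) differentiable_on S)"

definition C2_on :: "(real \<times> real) set \<Rightarrow> (real \<times> real \<Rightarrow> real) \<Rightarrow> bool" where
  "C2_on S u \<longleftrightarrow>
     (\<exists>(Du :: real \<times> real \<Rightarrow> (real \<times> real) \<Rightarrow>\<^sub>L real)
        (D2u :: real \<times> real \<Rightarrow> (real \<times> real) \<Rightarrow>\<^sub>L ((real \<times> real) \<Rightarrow>\<^sub>L real)).
        (\<forall>x\<in>S. (u has_derivative blinfun_apply (Du x)) (at x)) \<and> continuous_on S Du \<and>
        (\<forall>x\<in>S. (Du has_derivative blinfun_apply (D2u x)) (at x)) \<and> continuous_on S D2u)"

definition Delta :: "(real \<times> real) set" where
  "Delta = interior (convex hull {(-1, 0), (1, 1), (1, 0)})"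

definition l_seg :: "(real \<Rightarrow> real) \<Rightarrow> real \<Rightarrow> (real \<times> real) set" where
  "l_seg \<omega> a = {(x1, x2). x2 = \<omega> a * (x1 + a) \<and> -a < x1 \<and> x1 < 1}"

end

theory Submission
  imports Defs
begin

text \<open>
  Since \<omega> is increasing and positive on (0,1], the height \<omega>(a)(x1 + a) of l_a above x1 is
  strictly increasing in a, so every point x of the triangle lies on exactly one segment l_a, and
  by the inverse function theorem a = a(x) is a C^1 function of x. Let \<theta>(a) = arctan \<omega>(a) be
  the inclination of l_a. The function u0(x) = (x1 + a) sec \<theta>(a) - \<integral>[0,a] cos \<theta> is chosen so
  that the terms coming from differentiating a(x) cancel: its gradient is the unit direction
  (cos \<theta>(a), sin \<theta>(a)) of the segment through x. So u0 is C^2, and by the mean value theorem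
  on the convex triangle and Cauchy-Schwarz it is 1-Lipschitz, with equality only if y - x is
  parallel to the segment through an intermediate point, which then contains x and y. Along a
  segment u0 grows at unit speed. A 1-Lipschitz extension to the closure gives u.
\<close>

lemma convex_hull_triangle:
  "convex hull {(-1, 0), (1, 1), (1, 0)} =
     {x::real \<times> real. (0, 1) \<bullet> x \<ge> 0} \<inter> {x. (1, -2) \<bullet> x \<ge> -1} \<inter> {x. (-1, 0) \<bullet> x \<ge> -1}"
  (is "?H = ?T")
proof
  show "?H \<subseteq> ?T" unfolding convex_hull_3 by (auto simp: inner_Pair)
  show "?T \<subseteq> ?H"
  proof
    fix x assume "x \<in> ?T"
    then obtain x1 x2 where x: "x = (x1, x2)" and h: "0 \<le> x2" "x2 \<le> (x1 + 1) / 2" "x1 \<le> 1"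
      by (cases x) (auto simp: inner_Pair)
    have "(x1, x2) = ((1 - x1) / 2) *\<^sub>R (-1::real, 0::real) + x2 *\<^sub>R (1, 1) + ((1 + x1) / 2 - x2) *\<^sub>R (1, 0)"
      by (auto simp: field_simps)
    moreover have "0 \<le> (1 - x1) / 2" "0 \<le> (1 + x1) / 2 - x2" "(1 - x1) / 2 + x2 + ((1 + x1) / 2 - x2) = 1"
      using h by (auto simp: field_simps)
    ultimately show "x \<in> ?H" unfolding convex_hull_3 x using h(1) by blast
  qed
qed

lemma Delta_eq: "Delta = {x. 0 < snd x \<and> snd x < (fst x + 1) / 2 \<and> fst x < 1}"
proof -
  have ne: "(0::real, 1::real) \<noteq> 0" "(1::real, -2::real) \<noteq> 0" "(-1::real, 0::real) \<noteq> 0"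
    by (auto simp: zero_prod_def)
  have "Delta = {x::real \<times> real. (0, 1) \<bullet> x > 0} \<inter> {x. (1, -2) \<bullet> x > -1} \<inter> {x. (-1, 0) \<bullet> x > -1}"
    unfolding Delta_def convex_hull_triangle interior_Int interior_halfspace_ge[OF ne(1)]
      interior_halfspace_ge[OF ne(2)] interior_halfspace_ge[OF ne(3)] ..
  also have "\<dots> = {x. 0 < snd x \<and> snd x < (fst x + 1) / 2 \<and> fst x < 1}"
    by (auto simp: inner_prod_def)
  finally show ?thesis .
qed

lemma open_Delta: "open Delta"
  unfolding Delta_def by simp

lemma convex_Delta: "convex Delta"
  unfolding Delta_def by (simp add: convex_interior convex_convex_hull)

lemma Delta_segment:
  "x \<in> Delta \<Longrightarrow> y \<in> Delta \<Longrightarrow> t \<in> {0..1} \<Longrightarrow> x + t *\<^sub>R (y - x) \<in> Delta"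
  using convexD[OF convex_Delta, of x y "1 - t" t] by (simp add: algebra_simps)

lemma C_infinity_on_imp_C1_on:
  assumes "C_infinity_on S f" "open S"
  shows "\<And>t. t \<in> S \<Longrightarrow> f differentiable at t" and "continuous_on S (deriv f)"
proof -
  have "(deriv ^^ 0) f differentiable_on S" "(deriv ^^ 1) f differentiable_on S"
    using assms(1) unfolding C_infinity_on_def by blast+
  then show "\<And>t. t \<in> S \<Longrightarrow> f differentiable at t" "continuous_on S (deriv f)"
    using assms(2) by (auto simp: differentiable_on_eq_differentiable_at differentiable_imp_continuous_on)
qed

lemma C2_on_cong:
  assumes "open S" "\<And>x. x \<in> S \<Longrightarrow> u x = v x" "C2_on S v"
  shows "C2_on S u"
proof -
  obtain Du D2u where
    v: "\<forall>x\<in>S. (v has_derivative blinfun_apply (Du x)) (at x)" "continuous_on S Du"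
       "\<forall>x\<in>S. (Du has_derivative blinfun_apply (D2u x)) (at x)" "continuous_on S D2u"
    using assms(3) unfolding C2_on_def by blast
  have "(u has_derivative blinfun_apply (Du x)) (at x)" if "x \<in> S" for x
    using has_derivative_transform_within_open[OF v(1)[rule_format, OF that] assms(1) that] assms(2)
    by simp
  then show ?thesis unfolding C2_on_def using v(2-4) by blast
qed

lemma mvt_segment:
  fixes f :: "'a::real_normed_vector \<Rightarrow> real"
  assumes "\<And>t. t \<in> {0..1} \<Longrightarrow> (f has_derivative f' (x + t *\<^sub>R (y - x))) (at (x + t *\<^sub>R (y - x)))"
  shows "\<exists>t\<in>{0<..<1}. f y - f x = f' (x + t *\<^sub>R (y - x)) (y - x)"
proof -
  have line: "((\<lambda>t. x + t *\<^sub>R (y - x)) has_derivative (\<lambda>s. s *\<^sub>R (y - x))) (at t)" for t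
    by (auto intro!: derivative_eq_intros)
  have "((\<lambda>t. f (x + t *\<^sub>R (y - x))) has_derivative (\<lambda>s. f' (x + t *\<^sub>R (y - x)) (s *\<^sub>R (y - x))))
      (at t within {0..1})" if "t \<in> {0..1}" for t
    by (rule has_derivative_at_withinI[OF has_derivative_compose[OF line assms[OF that]]])
  from mvt_simple[of 0 1, OF _ this] show ?thesis by simp
qed

locale foliation_profile =
  fixes \<omega> :: "real \<Rightarrow> real"
  assumes continuous: "continuous_on {0..1} \<omega>"
    and differentiable: "\<And>t. t \<in> {0<..<1} \<Longrightarrow> \<omega> differentiable at t"
    and continuous_deriv: "continuous_on {0<..<1} (deriv \<omega>)"
    and deriv_pos: "\<And>t. t \<in> {0<..<1} \<Longrightarrow> deriv \<omega> t > 0"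
    and at_0: "\<omega> 0 = 0"
    and at_1: "\<omega> 1 = 1/2"
begin

lemma omega_has_real_derivative: "t \<in> {0<..<1} \<Longrightarrow> (\<omega> has_real_derivative deriv \<omega> t) (at t)"
  using differentiable by (simp add: DERIV_deriv_iff_real_differentiable)

lemma continuous_on_omega: "continuous_on {0<..<1} \<omega>"
  using continuous by (rule continuous_on_subset) auto

lemma omega_less: "0 \<le> s \<Longrightarrow> s < t \<Longrightarrow> t \<le> 1 \<Longrightarrow> \<omega> s < \<omega> t"
proof -
  assume st: "0 \<le> s" "s < t" "t \<le> 1"
  have "continuous_on {s..t} \<omega>" using continuous by (rule continuous_on_subset) (use st in auto)
  moreover have "\<omega> differentiable (at x)" if "s < x" "x < t" for x
    using differentiable[of x] that st by simp
  ultimately obtain l z where z: "s < z" "z < t" "DERIV \<omega> z :> l" "\<omega> t - \<omega> s = (t - s) * l"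
    using MVT[OF st(2)] by blast
  have "DERIV \<omega> z :> deriv \<omega> z" using omega_has_real_derivative[of z] z st by simp
  then have "l = deriv \<omega> z" using z(3) DERIV_unique by blast
  then have "(t - s) * l > 0" using deriv_pos[of z] z st by simp
  then show ?thesis using z(4) by linarith
qed

lemma omega_pos: "0 < t \<Longrightarrow> t \<le> 1 \<Longrightarrow> \<omega> t > 0"
  using omega_less[of 0 t] at_0 by auto

lemma mem_l_seg_iff: "x \<in> l_seg \<omega> a \<longleftrightarrow> snd x = \<omega> a * (fst x + a) \<and> -a < fst x \<and> fst x < 1"
  by (cases x) (simp add: l_seg_def)

lemma l_seg_disjoint:
  assumes "a \<in> {0<..<1}" "b \<in> {0<..<1}" "x \<in> l_seg \<omega> a" "x \<in> l_seg \<omega> b"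
  shows "a = b"
proof -
  have less: "\<omega> a * (fst x + a) < \<omega> b * (fst x + b)"
    if "a \<in> {0<..<1}" "b \<in> {0<..<1}" "a < b" "x \<in> l_seg \<omega> a" for a b
    using that omega_less[of a b] omega_pos[of a] by (intro mult_strict_mono) (auto simp: mem_l_seg_iff)
  show ?thesis
    using less[of a b] less[of b a] assms by (force simp: mem_l_seg_iff)
qed

lemma l_seg_cover:
  assumes "x \<in> Delta"
  shows "\<exists>a\<in>{0<..<1}. x \<in> l_seg \<omega> a"
proof -
  obtain x1 x2 where x: "x = (x1, x2)" "0 < x2" "x2 < (x1 + 1) / 2" "x1 < 1"
    using assms unfolding Delta_eq by (cases x) auto
  define a0 where "a0 = max 0 (-x1)"
  define g where "g a = \<omega> a * (x1 + a) - x2" for a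
  have a0: "0 \<le> a0" "a0 < 1" "- x1 \<le> a0" using x unfolding a0_def by auto
  have "\<omega> a0 * (x1 + a0) = 0"
    by (cases "0 \<le> x1") (simp_all add: a0_def at_0)
  then have "g a0 < 0" unfolding g_def using x(2) by linarith
  moreover have "g 1 > 0" unfolding g_def at_1 using x by auto
  moreover have "continuous_on {a0..1} g" unfolding g_def
    by (intro continuous_intros continuous_on_subset[OF continuous]) (use a0 in auto)
  ultimately obtain a where a: "a0 \<le> a" "a \<le> 1" "g a = 0"
    using IVT'[of g a0 0 1] a0 by auto
  moreover have "a \<noteq> a0" "a \<noteq> 1" using a \<open>g a0 < 0\<close> \<open>g 1 > 0\<close> by auto
  ultimately have "a0 < a" "a < 1" by auto
  moreover have "x \<in> l_seg \<omega> a"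
    using x a(3) \<open>a0 < a\<close> a0(3) unfolding g_def mem_l_seg_iff by simp
  ultimately show ?thesis using a0 by auto
qed

definition a_of :: "real \<times> real \<Rightarrow> real" where
  "a_of x = (THE a. a \<in> {0<..<1} \<and> x \<in> l_seg \<omega> a)"

lemma a_of_eq:
  assumes "a \<in> {0<..<1}" "x \<in> l_seg \<omega> a"
  shows "a_of x = a"
  unfolding a_of_def using assms l_seg_disjoint by (intro the_equality) blast+

lemma a_of_l_seg: "x \<in> Delta \<Longrightarrow> a_of x \<in> {0<..<1} \<and> x \<in> l_seg \<omega> (a_of x)"
  using l_seg_cover a_of_eq by metis

definition chart_domain :: "(real \<times> real) set" where
  "chart_domain = {p. 0 < fst p \<and> fst p < 1 \<and> - fst p < snd p \<and> snd p < 1}"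

definition chart :: "real \<times> real \<Rightarrow> real \<times> real" where
  "chart p = (snd p, \<omega> (fst p) * (snd p + fst p))"

(* The a-derivative of the height \<omega> a * (x1 + a) of l_a above x1; its positivity makes
   chart a local diffeomorphism. *)
definition height_deriv :: "real \<times> real \<Rightarrow> real" where
  "height_deriv x = deriv \<omega> (a_of x) * (fst x + a_of x) + \<omega> (a_of x)"

definition D_a_of :: "real \<times> real \<Rightarrow> (real \<times> real) \<Rightarrow>\<^sub>L real" where
  "D_a_of x = (1 / height_deriv x) *\<^sub>R (snd_blinfun - \<omega> (a_of x) *\<^sub>R fst_blinfun)"

lemma D_a_of_apply: "blinfun_apply (D_a_of x) h = (snd h - \<omega> (a_of x) * fst h) / height_deriv x"
  by (simp add: D_a_of_def scaleR_blinfun.rep_eq minus_blinfun.rep_eq)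

lemma a_of_chart: "p \<in> chart_domain \<Longrightarrow> (a_of (chart p), fst (chart p)) = p"
  using a_of_eq[of "fst p" "chart p"]
  by (cases p) (auto simp: chart_domain_def chart_def mem_l_seg_iff add.commute)

lemma height_deriv_pos:
  assumes "x \<in> Delta"
  shows "height_deriv x > 0"
proof -
  have "a_of x \<in> {0<..<1}" "0 < fst x + a_of x"
    using a_of_l_seg[OF assms] by (auto simp: mem_l_seg_iff)
  then show ?thesis
    unfolding height_deriv_def using deriv_pos omega_pos by (simp add: add_pos_pos)
qed

lemma open_chart_domain: "open chart_domain"
  unfolding chart_domain_def by (intro open_Collect_conj open_Collect_less continuous_intros)

lemma continuous_on_chart: "continuous_on chart_domain chart"
  unfolding chart_def[abs_def]
  by (intro continuous_intros continuous_on_compose2[OF continuous_on_omega]) (auto simp: chart_domain_def)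

lemma chart_has_derivative:
  assumes "fst p \<in> {0<..<1}"
  shows "(chart has_derivative (\<lambda>h. (snd h,
           \<omega> (fst p) * (snd h + fst h) + deriv \<omega> (fst p) * fst h * (snd p + fst p)))) (at p)"
proof -
  have "((\<lambda>q. \<omega> (fst q)) has_derivative (\<lambda>h. fst h * deriv \<omega> (fst p))) (at p)"
    using DERIV_compose_FDERIV[where g=fst and x=p and s=UNIV,
        OF _ bounded_linear_imp_has_derivative[OF bounded_linear_fst]]
      omega_has_real_derivative[OF assms] by simp
  then show ?thesis
    unfolding chart_def[abs_def]
    by (rule has_derivative_Pair[OF has_derivative_snd[OF has_derivative_ident]
        has_derivative_mult[OF _ has_derivative_add[OF has_derivative_snd has_derivative_fst],
          OF _ has_derivative_ident has_derivative_ident], THEN has_derivative_eq_rhs])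
      (auto simp: algebra_simps)
qed

lemma a_of_has_derivative:
  assumes x: "x \<in> Delta"
  shows "(a_of has_derivative blinfun_apply (D_a_of x)) (at x)"
proof -
  define a where "a = a_of x"
  define p where "p = (a, fst x)"
  have a: "a \<in> {0<..<1}" "snd x = \<omega> a * (fst x + a)" "- a < fst x" "fst x < 1"
    using a_of_l_seg[OF x] unfolding a_def mem_l_seg_iff by auto
  have p: "p \<in> chart_domain" "chart p = x"
    using a unfolding p_def chart_domain_def chart_def by (auto simp: algebra_simps prod_eq_iff)
  have "(\<lambda>h. (snd h, \<omega> a * (snd h + fst h) + deriv \<omega> a * fst h * (fst x + a)))
      \<circ> (\<lambda>h. (D_a_of x h, fst h)) = id"
  proof
    fix h :: "real \<times> real"
    have "\<omega> a * (fst h + D_a_of x h) + deriv \<omega> a * D_a_of x h * (fst x + a)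
        = \<omega> a * fst h + D_a_of x h * height_deriv x"
      by (simp add: height_deriv_def a_def algebra_simps)
    also have "D_a_of x h * height_deriv x = snd h - \<omega> a * fst h"
      using height_deriv_pos[OF x] by (simp add: D_a_of_apply a_def)
    finally show "((\<lambda>h. (snd h, \<omega> a * (snd h + fst h) + deriv \<omega> a * fst h * (fst x + a)))
        \<circ> (\<lambda>h. (D_a_of x h, fst h))) h = id h"
      by (simp add: prod_eq_iff)
  qed
  then have "((\<lambda>y. (a_of y, fst y)) has_derivative (\<lambda>h. (D_a_of x h, fst h))) (at (chart p))"
    using chart_has_derivative[of p] a(1)
    by (intro has_derivative_inverse_strong[OF open_chart_domain p(1) continuous_on_chart a_of_chart])
      (simp_all add: p_def add.commute)
  from has_derivative_fst[OF this] show ?thesis unfolding p(2) by simp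
qed

lemma continuous_on_a_of: "continuous_on Delta a_of"
  using a_of_has_derivative
  by (meson continuous_at_imp_continuous_on has_derivative_continuous)

lemma continuous_on_comp_a_of:
  "continuous_on {0<..<1} g \<Longrightarrow> continuous_on Delta (\<lambda>x. g (a_of x))"
  by (rule continuous_on_compose2[OF _ continuous_on_a_of]) (use a_of_l_seg in auto)

(* With \<theta> = arctan (\<omega> b) the inclination of l_b: secant b = sec \<theta>, unit_dir b = (cos \<theta>, sin \<theta>). *)

definition secant :: "real \<Rightarrow> real" where
  "secant b = sqrt (1 + (\<omega> b)\<^sup>2)"

definition unit_dir :: "real \<Rightarrow> real \<times> real" where
  "unit_dir b = (1 / secant b, \<omega> b / secant b)"

definition unit_dir' :: "real \<Rightarrow> real \<times> real" where
  "unit_dir' b = (deriv \<omega> b / secant b ^ 3) *\<^sub>R (- \<omega> b, 1)"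

definition cos_integral :: "real \<Rightarrow> real" where
  "cos_integral b = integral {0..b} (\<lambda>t. 1 / secant t)"

definition u0 :: "real \<times> real \<Rightarrow> real" where
  "u0 x = (fst x + a_of x) * secant (a_of x) - cos_integral (a_of x)"

lemma secant_pos: "secant b > 0"
  unfolding secant_def by (simp add: add_pos_nonneg)

lemma secant_nonzero [simp]: "secant b \<noteq> 0"
  using secant_pos[of b] by linarith

lemma secant_sq: "(secant b)\<^sup>2 = 1 + (\<omega> b)\<^sup>2"
  unfolding secant_def by (simp add: add_nonneg_nonneg)

lemma continuous_on_secant: "continuous_on {0..1} secant"
  unfolding secant_def[abs_def] by (intro continuous_intros continuous)

lemma secant_has_derivative:
  assumes "b \<in> {0<..<1}"
  shows "(secant has_real_derivative \<omega> b * deriv \<omega> b / secant b) (at b)"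
proof -
  have "((\<lambda>b. 1 + (\<omega> b)\<^sup>2) has_real_derivative 2 * \<omega> b * deriv \<omega> b) (at b)"
    using omega_has_real_derivative[OF assms] by (auto intro!: derivative_eq_intros)
  from DERIV_chain2[OF DERIV_real_sqrt this] show ?thesis
    unfolding secant_def[abs_def] by (simp add: add_pos_nonneg field_simps)
qed

lemma cos_integral_has_derivative:
  assumes "b \<in> {0<..<1}"
  shows "(cos_integral has_real_derivative 1 / secant b) (at b)"
proof -
  have "continuous_on {0..1} (\<lambda>t. 1 / secant t)"
    by (intro continuous_intros continuous_on_secant) simp
  then have "(cos_integral has_real_derivative 1 / secant b) (at b within {0..1})"
    unfolding cos_integral_def[abs_def] by (rule integral_has_real_derivative) (use assms in auto)
  moreover have "at b within {0..1} = at b" by (rule at_within_interior) (use assms in auto)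
  ultimately show ?thesis by simp
qed

lemma norm_unit_dir: "norm (unit_dir b) = 1"
  by (simp add: unit_dir_def norm_Pair power_divide add_divide_distrib[symmetric] secant_sq[symmetric])

lemma inner_unit_dir: "unit_dir b \<bullet> h = (fst h + \<omega> b * snd h) / secant b"
  by (simp add: unit_dir_def inner_prod_def add_divide_distrib)

lemma unit_dir_has_vector_derivative:
  assumes b: "b \<in> {0<..<1}"
  shows "(unit_dir has_vector_derivative unit_dir' b) (at b)"
proof -
  let ?R = "secant b" and ?D = "deriv \<omega> b"
  have "((\<lambda>b. 1 / secant b) has_real_derivative
      (0 * ?R - 1 * (\<omega> b * ?D / ?R)) / (?R * ?R)) (at b)"
    by (rule DERIV_divide[OF DERIV_const secant_has_derivative[OF b]]) simp
  moreover have "(0 * ?R - 1 * (\<omega> b * ?D / ?R)) / (?R * ?R) = - (?D / ?R ^ 3) * \<omega> b"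
    by (simp add: field_simps power3_eq_cube)
  moreover have "((\<lambda>b. \<omega> b / secant b) has_real_derivative
      (?D * ?R - \<omega> b * (\<omega> b * ?D / ?R)) / (?R * ?R)) (at b)"
    by (rule DERIV_divide[OF omega_has_real_derivative[OF b] secant_has_derivative[OF b]]) simp
  moreover have "(?D * ?R - \<omega> b * (\<omega> b * ?D / ?R)) / (?R * ?R) = ?D * (?R\<^sup>2 - (\<omega> b)\<^sup>2) / ?R ^ 3"
    by (simp add: field_simps power2_eq_square power3_eq_cube)
  ultimately show ?thesis
    unfolding unit_dir_def[abs_def] unit_dir'_def
    by (auto intro!: has_vector_derivative_Pair simp: secant_sq has_real_derivative_iff_has_vector_derivative)
qed

lemma continuous_on_unit_dir: "continuous_on {0<..<1} unit_dir"
  using unit_dir_has_vector_derivative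
  by (meson continuous_at_imp_continuous_on has_vector_derivative_continuous)

lemma continuous_on_unit_dir': "continuous_on {0<..<1} unit_dir'"
proof -
  have "continuous_on {0<..<1} secant"
    using continuous_on_secant by (rule continuous_on_subset) auto
  then show ?thesis
    unfolding unit_dir'_def[abs_def]
    by (intro continuous_intros continuous_deriv continuous_on_omega) auto
qed

lemma u0_has_derivative:
  assumes x: "x \<in> Delta"
  shows "(u0 has_derivative (\<lambda>h. unit_dir (a_of x) \<bullet> h)) (at x)"
proof -
  define a where "a = a_of x"
  let ?R = "secant a"
  have a: "a \<in> {0<..<1}" using a_of_l_seg[OF x] unfolding a_def by simp
  note da = a_of_has_derivative[OF x, folded a_def]
  have "((\<lambda>y. fst y + a_of y) has_derivative (\<lambda>h. fst h + D_a_of x h)) (at x)"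
    by (rule has_derivative_add[OF has_derivative_fst[OF has_derivative_ident] da])
  moreover have "((\<lambda>y. secant (a_of y)) has_derivative (\<lambda>h. D_a_of x h * (\<omega> a * deriv \<omega> a / ?R))) (at x)"
    unfolding a_def by (rule DERIV_compose_FDERIV[OF secant_has_derivative[OF a, unfolded a_def] da])
  moreover have "((\<lambda>y. cos_integral (a_of y)) has_derivative (\<lambda>h. D_a_of x h * (1 / ?R))) (at x)"
    unfolding a_def by (rule DERIV_compose_FDERIV[OF cos_integral_has_derivative[OF a, unfolded a_def] da])
  ultimately have "(u0 has_derivative (\<lambda>h. (fst x + a) * (D_a_of x h * (\<omega> a * deriv \<omega> a / ?R))
      + (fst h + D_a_of x h) * ?R - D_a_of x h * (1 / ?R))) (at x)"
    unfolding u0_def[abs_def] a_def by (intro has_derivative_diff has_derivative_mult)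
  moreover have "(fst x + a) * (D_a_of x h * (\<omega> a * deriv \<omega> a / ?R)) + (fst h + D_a_of x h) * ?R
      - D_a_of x h * (1 / ?R) = unit_dir a \<bullet> h" for h
  proof -
    have "(fst x + a) * (D_a_of x h * (\<omega> a * deriv \<omega> a / ?R)) + (fst h + D_a_of x h) * ?R - D_a_of x h * (1 / ?R)
        = (fst h * ?R\<^sup>2 + \<omega> a * (D_a_of x h * height_deriv x) + D_a_of x h * (?R\<^sup>2 - 1 - (\<omega> a)\<^sup>2)) / ?R"
      by (simp add: height_deriv_def a_def field_simps power2_eq_square)
    also have "D_a_of x h * height_deriv x = snd h - \<omega> a * fst h"
      using height_deriv_pos[OF x] by (simp add: D_a_of_apply a_def)
    also have "(fst h * ?R\<^sup>2 + \<omega> a * (snd h - \<omega> a * fst h) + D_a_of x h * (?R\<^sup>2 - 1 - (\<omega> a)\<^sup>2)) / ?R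
        = (fst h + \<omega> a * snd h) / ?R"
      unfolding secant_sq by (simp add: algebra_simps power2_eq_square)
    finally show ?thesis by (simp add: inner_unit_dir)
  qed
  ultimately show ?thesis by (simp add: a_def)
qed

definition Du0 :: "real \<times> real \<Rightarrow> (real \<times> real) \<Rightarrow>\<^sub>L real" where
  "Du0 x = blinfun_inner_right (unit_dir (a_of x))"

definition D2u0 :: "real \<times> real \<Rightarrow> (real \<times> real) \<Rightarrow>\<^sub>L (real \<times> real) \<Rightarrow>\<^sub>L real" where
  "D2u0 x = blinfun_scaleR_left (blinfun_inner_right (unit_dir' (a_of x))) o\<^sub>L D_a_of x"

lemma Du0_has_derivative:
  assumes x: "x \<in> Delta"
  shows "(Du0 has_derivative blinfun_apply (D2u0 x)) (at x)"
proof -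
  have "((\<lambda>y. unit_dir (a_of y)) has_derivative (\<lambda>h. D_a_of x h *\<^sub>R unit_dir' (a_of x))) (at x)"
    using a_of_l_seg[OF x] by (intro has_derivative_compose[OF a_of_has_derivative[OF x]]
        unit_dir_has_vector_derivative[unfolded has_vector_derivative_def]) simp
  then have "(Du0 has_derivative (\<lambda>h. blinfun_inner_right (D_a_of x h *\<^sub>R unit_dir' (a_of x)))) (at x)"
    unfolding Du0_def[abs_def] by (rule bounded_linear.has_derivative[OF bounded_linear_blinfun_inner_right])
  moreover have "blinfun_inner_right (D_a_of x h *\<^sub>R unit_dir' (a_of x)) = D2u0 x h" for h
    by (rule blinfun_eqI) (simp add: D2u0_def scaleR_blinfun.rep_eq)
  ultimately show ?thesis by simp
qed

lemma continuous_on_D_a_of: "continuous_on Delta D_a_of"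
proof -
  have "continuous_on Delta height_deriv"
    unfolding height_deriv_def[abs_def]
    by (intro continuous_intros continuous_on_comp_a_of continuous_deriv continuous_on_omega
        continuous_on_a_of)
  moreover have "\<forall>x\<in>Delta. height_deriv x \<noteq> 0"
    using height_deriv_pos by fastforce
  ultimately show ?thesis
    unfolding D_a_of_def[abs_def]
    by (intro continuous_intros continuous_on_comp_a_of continuous_on_omega)
qed

lemma C2_on_u0: "C2_on Delta u0"
  unfolding C2_on_def
proof (intro exI conjI ballI)
  show "(u0 has_derivative blinfun_apply (Du0 x)) (at x)" if "x \<in> Delta" for x
    using u0_has_derivative[OF that] by (simp add: Du0_def)
  show "continuous_on Delta Du0"
    unfolding Du0_def[abs_def] by (intro continuous_intros continuous_on_comp_a_of continuous_on_unit_dir)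
  show "(Du0 has_derivative blinfun_apply (D2u0 x)) (at x)" if "x \<in> Delta" for x
    by (rule Du0_has_derivative[OF that])
  show "continuous_on Delta D2u0"
    unfolding D2u0_def[abs_def]
    by (intro continuous_intros continuous_on_comp_a_of continuous_on_unit_dir' continuous_on_D_a_of)
qed

lemma u0_mvt:
  assumes "x \<in> Delta" "y \<in> Delta"
  obtains t where "t \<in> {0..1}" "u0 y - u0 x = unit_dir (a_of (x + t *\<^sub>R (y - x))) \<bullet> (y - x)"
proof -
  obtain t where "t \<in> {0<..<1}" "u0 y - u0 x = unit_dir (a_of (x + t *\<^sub>R (y - x))) \<bullet> (y - x)"
    using mvt_segment[of u0 "\<lambda>z h. unit_dir (a_of z) \<bullet> h",
        OF u0_has_derivative[OF Delta_segment[OF assms]]] by blast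
  then show ?thesis using that[of t] by simp
qed

lemma u0_dist_le:
  assumes "x \<in> Delta" "y \<in> Delta"
  shows "\<bar>u0 x - u0 y\<bar> \<le> dist x y"
proof -
  obtain t where "u0 y - u0 x = unit_dir (a_of (x + t *\<^sub>R (y - x))) \<bullet> (y - x)"
    using u0_mvt[OF assms] .
  then have "\<bar>u0 x - u0 y\<bar> = \<bar>unit_dir (a_of (x + t *\<^sub>R (y - x))) \<bullet> (y - x)\<bar>" by linarith
  also have "\<dots> \<le> norm (y - x)"
    using Cauchy_Schwarz_ineq2[of "unit_dir (a_of (x + t *\<^sub>R (y - x)))" "y - x"]
    by (simp add: norm_unit_dir)
  finally show ?thesis by (simp add: dist_norm norm_minus_commute)
qed

lemma parallel_if_inner_unit_dir_eq_norm:
  assumes "\<bar>unit_dir b \<bullet> d\<bar> = norm d"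
  shows "snd d = \<omega> b * fst d"
proof -
  have "d = norm d *\<^sub>R unit_dir b \<or> d = (- norm d) *\<^sub>R unit_dir b"
    using assms norm_cauchy_schwarz_abs_eq[of "unit_dir b" d] by (simp add: norm_unit_dir)
  then obtain c where "d = c *\<^sub>R unit_dir b" by blast
  then show ?thesis by (simp add: unit_dir_def)
qed

lemma line_through_l_seg:
  assumes "a \<in> {0<..<1}" "z \<in> l_seg \<omega> a" "p \<in> Delta" "snd (p - z) = \<omega> a * fst (p - z)"
  shows "p \<in> l_seg \<omega> a"
proof -
  have "snd p = \<omega> a * (fst p + a)"
    using assms(2,4) by (simp add: mem_l_seg_iff algebra_simps)
  moreover have "0 < snd p" "fst p < 1" using assms(3) by (auto simp: Delta_eq)
  moreover have "\<omega> a > 0" using assms(1) omega_pos by simp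
  ultimately have "0 < fst p + a" by (metis zero_less_mult_pos)
  then show ?thesis
    using \<open>snd p = _\<close> \<open>fst p < 1\<close> by (simp add: mem_l_seg_iff)
qed

lemma u0_dist_eq_imp_l_seg:
  assumes "x \<in> Delta" "y \<in> Delta" "\<bar>u0 x - u0 y\<bar> = dist x y"
  shows "\<exists>a\<in>{0<..<1}. x \<in> l_seg \<omega> a \<and> y \<in> l_seg \<omega> a"
proof -
  obtain t where t: "t \<in> {0..1}"
    and u: "u0 y - u0 x = unit_dir (a_of (x + t *\<^sub>R (y - x))) \<bullet> (y - x)"
    using u0_mvt[OF assms(1,2)] .
  define z where "z = x + t *\<^sub>R (y - x)"
  have z: "a_of z \<in> {0<..<1}" "z \<in> l_seg \<omega> (a_of z)"
    using a_of_l_seg[OF Delta_segment[OF assms(1,2) t]] unfolding z_def by auto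
  have "\<bar>unit_dir (a_of z) \<bullet> (y - x)\<bar> = norm (y - x)"
    using assms(3) u unfolding z_def by (simp add: dist_norm norm_minus_commute abs_minus_commute)
  then have par: "snd (y - x) = \<omega> (a_of z) * fst (y - x)"
    by (rule parallel_if_inner_unit_dir_eq_norm)
  have "p \<in> l_seg \<omega> (a_of z)" if "p \<in> Delta" "p - z = c *\<^sub>R (y - x)" for p c
    using that par by (intro line_through_l_seg[OF z]) simp_all
  moreover have "x - z = (- t) *\<^sub>R (y - x)" "y - z = (1 - t) *\<^sub>R (y - x)"
    unfolding z_def by (simp_all add: algebra_simps)
  ultimately show ?thesis using z(1) assms(1,2) by blast
qed

lemma secant_eq_norm: "secant b = norm (1::real, \<omega> b)"
  by (simp add: secant_def norm_Pair)

lemma u0_dist_eq_if_l_seg: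
  assumes "a \<in> {0<..<1}" "x \<in> l_seg \<omega> a" "y \<in> l_seg \<omega> a"
  shows "\<bar>u0 x - u0 y\<bar> = dist x y"
proof -
  have "a_of x = a" "a_of y = a" using a_of_eq assms by auto
  then have "\<bar>u0 x - u0 y\<bar> = \<bar>fst x - fst y\<bar> * secant a"
    using secant_pos[of a] by (simp add: u0_def abs_mult flip: left_diff_distrib)
  moreover have "x - y = (fst x - fst y) *\<^sub>R (1::real, \<omega> a)"
    using assms(2,3) by (simp add: mem_l_seg_iff prod_eq_iff algebra_simps)
  then have "dist x y = \<bar>fst x - fst y\<bar> * secant a"
    by (simp only: dist_norm norm_scaleR secant_eq_norm real_norm_def)
  ultimately show ?thesis by simp
qed

end

theorem lemma3p2:
  fixes \<omega> :: "real \<Rightarrow> real"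
  assumes "\<omega> ` {0..1} \<subseteq> {0..1/2}"
    and "continuous_on {0..1} \<omega>"
    and "C_infinity_on {0<..<1} \<omega>"
    and "\<forall>t\<in>{0<..<1}. deriv \<omega> t > 0"
    and "\<omega> 0 = 0" and "\<omega> 1 = 1/2"
  shows "\<exists>u :: real \<times> real \<Rightarrow> real.
           continuous_on (closure Delta) u \<and> (\<exists>L. L\<ge>0 \<and> L-lipschitz_on (closure Delta) u) \<and>
           C2_on Delta u \<and>
           (\<forall>x\<in>Delta. \<forall>y\<in>Delta. \<bar>u x - u y\<bar> \<le> dist x y \<and>
              (\<bar>u x - u y\<bar> = dist x y \<longleftrightarrow> (\<exists>a\<in>{0<..<1}. x \<in> l_seg \<omega> a \<and> y \<in> l_seg \<omega> a)))"
proof -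
  interpret foliation_profile \<omega>
    using assms(2-6) C_infinity_on_imp_C1_on[OF assms(3)] by unfold_locales auto
  have "1-lipschitz_on Delta u0"
    by (rule lipschitz_onI) (auto simp: dist_real_def u0_dist_le)
  then obtain u where u: "1-lipschitz_on (closure Delta) u" "\<And>x. x \<in> Delta \<Longrightarrow> u x = u0 x"
    using lipschitz_extend_closure by blast
  have "C2_on Delta u"
    using open_Delta u(2) C2_on_u0 by (rule C2_on_cong)
  moreover have "continuous_on (closure Delta) u"
    using u(1) by (rule lipschitz_on_continuous_on)
  ultimately show ?thesis
    using u u0_dist_le u0_dist_eq_imp_l_seg u0_dist_eq_if_l_seg
    by (intro exI[of _ u]) (auto intro!: exI[of _ 1])
qed

end
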